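(* Let $D$ be a positive definite diagonal $n\times n$ matrix, let $1<p\le\infty$ and let $q$ satisfy $\frac1p+\frac1q=1$. Then $$I(p,D)=\Big(\sum_{i=1}^n D_{ii}^{-q}\Big)^{-1/q}.$$ (For $p=\infty$, i.e. the spectral norm, this reads $I(sp,D)=(\sum_i D_{ii}^{-1})^{-1}$.)
   Context: $P(n)$ denotes positive semidefinite complex $n\times n$ matrices and $\circ$ the Hadamard product. $\|\cdot\|_p$ is the Schatten $p$-norm ($\|\cdot\|_\infty$ the spectral norm), and $I(p,A)=\min\{\|A\circ B\|_p: B\in P(n),\ \|B\|_p=1\}$. *)

theory Defs
  imports "Jordan_Normal_Form.Schur_Decomposition" "Jordan_Normal_Form.Spectral_Radius"
    "HOL-Library.Extended_Real"
begin

definition qform :: "complex mat \<Rightarrow> complex vec \<Rightarrow> complex" where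
  "qform A v = scalar_prod (conjugate v) (mult_mat_vec A v)"

definition psd_mats :: "nat \<Rightarrow> complex mat set" where
  "psd_mats n = {A. A \<in> carrier_mat n n \<and> mat_adjoint A = A \<and>
     (\<forall>v \<in> carrier_vec n. qform A v \<in> \<real> \<and> Re (qform A v) \<ge> 0)}"

definition pd_mat :: "nat \<Rightarrow> complex mat \<Rightarrow> bool" where
  "pd_mat n A \<longleftrightarrow> A \<in> carrier_mat n n \<and> mat_adjoint A = A \<and>
     (\<forall>v \<in> carrier_vec n. v \<noteq> 0\<^sub>v n \<longrightarrow> qform A v \<in> \<real> \<and> Re (qform A v) > 0)"

definition hadamard :: "complex mat \<Rightarrow> complex mat \<Rightarrow> complex mat" where
  "hadamard A B = mat (dim_row A) (dim_col A) (\<lambda>(i,j). A $$ (i,j) * B $$ (i,j))"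

text \<open>Squared singular values: eigenvalues of A^* A (roots of its characteristic polynomial,
  counted with algebraic multiplicity via order).\<close>
definition sq_sing_vals :: "complex mat \<Rightarrow> complex set" where
  "sq_sing_vals A = {z. poly (char_poly (mat_adjoint A * A)) z = 0}"

definition schatten_norm :: "ereal \<Rightarrow> complex mat \<Rightarrow> real" where
  "schatten_norm p A =
     (if p = \<infinity> then Max ((\<lambda>z. sqrt (cmod z)) ` sq_sing_vals A)
      else (\<Sum>z \<in> sq_sing_vals A.
              real (order z (char_poly (mat_adjoint A * A))) * sqrt (cmod z) powr real_of_ereal p)
           powr (1 / real_of_ereal p))"

text \<open>I(p,A) = min { ||A o B||_p : B in P(n), ||B||_p = 1 } (rendered as an infimum).\<close>
definition I_val :: "ereal \<Rightarrow> nat \<Rightarrow> complex mat \<Rightarrow> real" where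
  "I_val p n A = Inf {schatten_norm p (hadamard A B) | B. B \<in> psd_mats n \<and> schatten_norm p B = 1}"

end

theory Submission
  imports Defs "HOL-Analysis.Convex"
begin

text \<open>
  For diagonal D the Hadamard product D o B is diagonal with entries D_ii B_ii, so ||D o B||_p
  is the l^p norm of the vector (d_i |B_ii|), where d_i = D_ii > 0.  If B is positive
  semidefinite with ||B||_p = 1, its eigenvalues t_i >= 0 satisfy ||t||_p = 1, hence
  1 <= sum t_i = tr B <= sum |B_ii|.  Hoelder's inequality turns this into
  1 <= ||(d_i |B_ii|)||_p * ||(1/d_i)||_q, i.e. ||D o B||_p >= (sum d_i^(-q))^(-1/q).
  Equality holds for the rank-one projection B = v v^* with |v_i|^2 proportional to d_i^(-q).
\<close>

lemma Holder_inequality_sum: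
  fixes x y :: "'i \<Rightarrow> real"
  assumes "finite I" and x: "\<And>i. i \<in> I \<Longrightarrow> 0 \<le> x i" and y: "\<And>i. i \<in> I \<Longrightarrow> 0 \<le> y i"
    and pq: "1 < p" "1 < q" "1/p + 1/q = 1"
  shows "(\<Sum>i\<in>I. x i * y i) \<le> (\<Sum>i\<in>I. x i powr p) powr (1/p) * (\<Sum>i\<in>I. y i powr q) powr (1/q)"
proof -
  define A where "A = (\<Sum>i\<in>I. x i powr p) powr (1/p)"
  define B where "B = (\<Sum>i\<in>I. y i powr q) powr (1/q)"
  have sums_nonneg: "0 \<le> (\<Sum>i\<in>I. x i powr p)" "0 \<le> (\<Sum>i\<in>I. y i powr q)"
    by (simp_all add: sum_nonneg)
  show ?thesis
  proof (cases "A = 0 \<or> B = 0")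
    case True
    then have "(\<forall>i\<in>I. x i = 0) \<or> (\<forall>i\<in>I. y i = 0)"
      using \<open>finite I\<close> sums_nonneg by (auto simp: A_def B_def sum_nonneg_eq_0_iff)
    then show ?thesis
      using True by (auto simp: A_def [symmetric] B_def [symmetric])
  next
    case False
    then have "0 < A" "0 < B" by (simp_all add: A_def B_def)
    have A_pow: "A powr p = (\<Sum>i\<in>I. x i powr p)" and B_pow: "B powr q = (\<Sum>i\<in>I. y i powr q)"
      using sums_nonneg pq by (simp_all add: A_def B_def powr_powr)
    have "(\<Sum>i\<in>I. (x i / A) * (y i / B)) \<le> (\<Sum>i\<in>I. (x i / A) powr p / p + (y i / B) powr q / q)"
      using x y pq \<open>0 < A\<close> \<open>0 < B\<close> by (intro sum_mono Youngs_inequality) auto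
    also have "\<dots> = (\<Sum>i\<in>I. x i powr p) / A powr p / p + (\<Sum>i\<in>I. y i powr q) / B powr q / q"
      using x y \<open>0 < A\<close> \<open>0 < B\<close> by (simp add: sum.distrib powr_divide sum_divide_distrib)
    also have "\<dots> = 1"
      using \<open>0 < A\<close> \<open>0 < B\<close> pq by (simp flip: A_pow B_pow)
    finally have "(\<Sum>i\<in>I. x i * y i) / (A * B) \<le> 1"
      by (simp add: sum_divide_distrib)
    then show ?thesis
      using \<open>0 < A\<close> \<open>0 < B\<close> by (simp add: A_def [symmetric] B_def [symmetric] divide_le_eq)
  qed
qed

definition lp_norm :: "ereal \<Rightarrow> nat \<Rightarrow> (nat \<Rightarrow> real) \<Rightarrow> real" where
  "lp_norm p n x =
     (if p = \<infinity> then Max (x ` {..<n})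
      else (\<Sum>i<n. x i powr real_of_ereal p) powr (1 / real_of_ereal p))"

lemma lp_norm_cong:
  assumes "\<And>i. i < n \<Longrightarrow> x i = y i"
  shows "lp_norm p n x = lp_norm p n y"
proof -
  have "x ` {..<n} = y ` {..<n}" "(\<Sum>i<n. x i powr r) = (\<Sum>i<n. y i powr r)" for r
    using assms by (auto intro!: image_cong sum.cong)
  then show ?thesis
    by (simp add: lp_norm_def)
qed

lemma conjugate_exponent_cases:
  assumes "1 < p" and "inverse p + ereal (1/q) = 1"
  obtains "p = \<infinity>" "q = 1"
  | r where "p = ereal r" "1 < r" "1 < q" "1/r + 1/q = 1"
proof (cases p)
  case PInf
  then show ?thesis using assms that(1) by (simp add: one_ereal_def)
next
  case (real r)
  with assms have "1 < r" "1/r + 1/q = 1"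
    by (simp_all add: one_ereal_def inverse_eq_divide)
  moreover have "1 < q"
  proof -
    have "0 < 1 - 1/r" "1 - 1/r < 1"
      using \<open>1 < r\<close> by (auto simp: field_simps)
    moreover have "1/q = 1 - 1/r"
      using \<open>1/r + 1/q = 1\<close> by linarith
    ultimately have "0 < 1/q" "1/q < 1"
      by auto
    then show ?thesis by (simp add: field_simps split: if_splits)
  qed
  ultimately show ?thesis using real that(2) by blast
next
  case MInf
  then show ?thesis using assms by simp
qed

lemma lp_norm_Holder:
  assumes "1 < p" "inverse p + ereal (1/q) = 1"
    and x: "\<And>i. i < n \<Longrightarrow> 0 \<le> x i" and y: "\<And>i. i < n \<Longrightarrow> 0 \<le> y i"
  shows "(\<Sum>i<n. x i * y i) \<le> lp_norm p n x * lp_norm (ereal q) n y"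
  using assms(1,2)
proof (cases rule: conjugate_exponent_cases)
  case 1
  have "0 \<le> (\<Sum>i<n. y i)"
    by (rule sum_nonneg) (simp add: y)
  have "(\<Sum>i<n. x i * y i) \<le> (\<Sum>i<n. Max (x ` {..<n}) * y i)"
    using y by (intro sum_mono mult_right_mono) auto
  also have "\<dots> = Max (x ` {..<n}) * (\<Sum>i<n. y i)"
    by (simp add: sum_distrib_left)
  also have "\<dots> = lp_norm p n x * lp_norm (ereal q) n y"
    using 1 \<open>0 \<le> (\<Sum>i<n. y i)\<close> y by (simp add: lp_norm_def)
  finally show ?thesis .
next
  case (2 r)
  then show ?thesis
    using Holder_inequality_sum[of "{..<n}" x y r q] x y by (simp add: lp_norm_def)
qed

lemma sum_ge_1_if_lp_norm_eq_1:
  assumes "1 \<le> p" "0 < n" and x: "\<And>i. i < n \<Longrightarrow> 0 \<le> x i" and norm: "lp_norm p n x = 1"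
  shows "1 \<le> (\<Sum>i<n. x i)"
proof (cases p)
  case PInf
  have "Max (x ` {..<n}) \<in> x ` {..<n}"
    using \<open>0 < n\<close> by (intro Max_in) auto
  then obtain j where "j < n" "x j = 1"
    using norm PInf by (auto simp: lp_norm_def)
  then show ?thesis
    using member_le_sum[of j "{..<n}" x] x by auto
next
  case (real r)
  with assms have "1 \<le> r" by (simp add: one_ereal_def)
  have "((\<Sum>i<n. x i powr r) powr (1 / r)) powr r = 1"
    using norm real by (simp add: lp_norm_def)
  then have sum_pow: "(\<Sum>i<n. x i powr r) = 1"
    using \<open>1 \<le> r\<close> by (simp add: powr_powr sum_nonneg)
  have "x i powr r \<le> x i" if "i < n" for i
  proof -
    have "x i powr r \<le> 1"
      using member_le_sum[of i "{..<n}" "\<lambda>i. x i powr r"] that sum_pow by simp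
    then have "x i \<le> 1"
      using \<open>1 \<le> r\<close> x[OF that] powr_less_mono2[of r 1 "x i"] by fastforce
    show ?thesis
    proof (cases "x i = 0")
      case False
      then have "x i powr r \<le> x i powr 1"
        using \<open>1 \<le> r\<close> x[OF that] \<open>x i \<le> 1\<close> by (intro powr_mono') auto
      then show ?thesis
        using x[OF that] by simp
    qed simp
  qed
  then show ?thesis
    using sum_mono[of "{..<n}" "\<lambda>i. x i powr r" x] sum_pow by auto
next
  case MInf
  then show ?thesis using assms by simp
qed

lemma lp_norm_eq_1_if_sum_and_sum_squares_eq_1:
  assumes "0 < p" and t: "\<And>i. i < n \<Longrightarrow> 0 \<le> t i"
    and sum1: "(\<Sum>i<n. t i) = 1" and sum2: "(\<Sum>i<n. t i ^ 2) = 1"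
  shows "lp_norm p n t = 1"
proof -
  have t_le_1: "t i \<le> 1" if "i < n" for i
    using member_le_sum[of i "{..<n}" t] t that sum1 by auto
  then have "\<forall>i\<in>{..<n}. 0 \<le> t i - t i ^ 2"
    using t by (auto simp: power2_eq_square intro!: mult_left_le)
  moreover have "(\<Sum>i<n. t i - t i ^ 2) = 0"
    using sum1 sum2 by (simp add: sum_subtractf)
  ultimately have "\<forall>i\<in>{..<n}. t i - t i ^ 2 = 0"
    using sum_nonneg_eq_0_iff[of "{..<n}" "\<lambda>i. t i - t i ^ 2"] by simp
  then have t01: "t i = 0 \<or> t i = 1" if "i < n" for i
    using that by (auto simp: power2_eq_square)
  have "\<exists>j<n. t j = 1"
    using sum1 t01 by (metis (no_types, lifting) lessThan_iff sum.neutral zero_neq_one)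
  show ?thesis
  proof (cases p)
    case PInf
    show ?thesis
      using PInf t_le_1 \<open>\<exists>j<n. t j = 1\<close> by (auto simp: lp_norm_def intro!: Max_eqI)
  next
    case (real r)
    have "(\<Sum>i<n. t i powr r) = (\<Sum>i<n. t i)"
    proof (intro sum.cong refl)
      fix i assume "i \<in> {..<n}"
      then show "t i powr r = t i"
        using t01[of i] \<open>0 < p\<close> real by auto
    qed
    then show ?thesis
      using real sum1 by (simp add: lp_norm_def)
  next
    case MInf
    then show ?thesis using assms by simp
  qed
qed

lemma lp_norm_weighted_lower_bound:
  assumes "1 < p" "inverse p + ereal (1/q) = 1" "0 < n"
    and d: "\<And>i. i < n \<Longrightarrow> 0 < d i" and x: "\<And>i. i < n \<Longrightarrow> 0 \<le> x i"
    and "1 \<le> (\<Sum>i<n. x i)"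
  defines "S \<equiv> \<Sum>i<n. d i powr (-q)"
  shows "S powr (-1/q) \<le> lp_norm p n (\<lambda>i. d i * x i)"
proof -
  have d_ne: "d i \<noteq> 0" if "i < n" for i
    using d[OF that] by simp
  have "0 < S"
    unfolding S_def using d_ne \<open>0 < n\<close> by (intro sum_pos) auto
  have "(\<Sum>i<n. x i) = (\<Sum>i<n. (d i * x i) * (1 / d i))"
    using d_ne by (intro sum.cong) auto
  also have "\<dots> \<le> lp_norm p n (\<lambda>i. d i * x i) * lp_norm (ereal q) n (\<lambda>i. 1 / d i)"
    using assms(1,2) by (intro lp_norm_Holder) (auto intro!: mult_nonneg_nonneg x less_imp_le[OF d])
  also have "lp_norm (ereal q) n (\<lambda>i. 1 / d i) = S powr (1/q)"
    using d unfolding S_def lp_norm_def by (auto simp: powr_divide powr_minus_divide intro!: sum.cong)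
  finally have "1 \<le> lp_norm p n (\<lambda>i. d i * x i) * S powr (1/q)"
    using \<open>1 \<le> (\<Sum>i<n. x i)\<close> by linarith
  moreover have "S powr (-1/q) = 1 / S powr (1/q)"
    by (simp add: powr_minus_divide)
  ultimately show ?thesis
    using \<open>0 < S\<close> by (simp add: divide_le_eq)
qed

lemma lp_norm_weighted_attained:
  assumes "1 < p" "inverse p + ereal (1/q) = 1" "0 < n" and d: "\<And>i. i < n \<Longrightarrow> 0 < d i"
  defines "S \<equiv> \<Sum>i<n. d i powr (-q)"
  shows "lp_norm p n (\<lambda>i. d i * (d i powr (-q) / S)) = S powr (-1/q)"
proof -
  have d_ne: "d i \<noteq> 0" if "i < n" for i
    using d[OF that] by simp
  have "0 < S"
    unfolding S_def using d_ne \<open>0 < n\<close> by (intro sum_pos) auto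
  have weighted: "d i * (d i powr (-q) / S) = d i powr (1 - q) / S" if "i < n" for i
    using d[OF that] by (simp add: powr_diff powr_minus_divide)
  from assms(1,2) show ?thesis
  proof (cases rule: conjugate_exponent_cases)
    case 1
    have "d i * (d i powr (-q) / S) = 1 / S" if "i < n" for i
      using weighted[OF that] d_ne[OF that] 1 by simp
    then have "(\<lambda>i. d i * (d i powr (-q) / S)) ` {..<n} = {1 / S}"
      using \<open>0 < n\<close> by force
    then show ?thesis
      using 1 \<open>0 < S\<close> by (simp add: lp_norm_def powr_minus_divide)
  next
    case (2 r)
    have "(\<Sum>i<n. (d i * (d i powr (-q) / S)) powr r) = (\<Sum>i<n. d i powr (-q) / S powr r)"
    proof (intro sum.cong refl)
      fix i assume "i \<in> {..<n}"
      have "(1 - q) * r = - q" using 2 by (simp add: field_simps)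
      then show "(d i * (d i powr (-q) / S)) powr r = d i powr (-q) / S powr r"
        using \<open>i \<in> {..<n}\<close> d \<open>0 < S\<close> weighted by (simp add: powr_divide powr_powr)
    qed
    also have "\<dots> = S powr (1 - r)"
      using \<open>0 < S\<close> by (simp add: S_def [symmetric] sum_divide_distrib [symmetric] powr_diff)
    moreover have "(1 - r) / r = - (1/q)"
      using 2 by (simp add: diff_divide_distrib)
    ultimately show ?thesis
      using 2 \<open>0 < S\<close> by (simp add: lp_norm_def powr_powr)
  qed
qed

definition mat_trace :: "'a::comm_ring_1 mat \<Rightarrow> 'a" where
  "mat_trace A = (\<Sum>i<dim_row A. A $$ (i,i))"

lemma mat_trace_mult_comm:
  fixes A B :: "'a::comm_ring_1 mat"
  assumes "A \<in> carrier_mat n m" "B \<in> carrier_mat m n"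
  shows "mat_trace (A * B) = mat_trace (B * A)"
proof -
  have "mat_trace (A * B) = (\<Sum>i<n. \<Sum>k<m. A $$ (i,k) * B $$ (k,i))"
    using assms by (auto simp: mat_trace_def scalar_prod_def atLeast0LessThan intro!: sum.cong)
  also have "\<dots> = (\<Sum>k<m. \<Sum>i<n. B $$ (k,i) * A $$ (i,k))"
    by (subst sum.swap) (simp add: mult.commute)
  also have "\<dots> = mat_trace (B * A)"
    using assms by (auto simp: mat_trace_def scalar_prod_def atLeast0LessThan intro!: sum.cong)
  finally show ?thesis .
qed

lemma mat_trace_similar:
  fixes A T :: "'a::comm_ring_1 mat"
  assumes "similar_mat_wit A T P Q"
  shows "mat_trace A = mat_trace T"
proof -
  obtain n where carrier: "{A, T, P, Q} \<subseteq> carrier_mat n n"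
    and "Q * P = 1\<^sub>m n" and "A = P * T * Q"
    using assms unfolding similar_mat_wit_def Let_def by blast
  then have "mat_trace A = mat_trace ((P * T) * Q)"
    by blast
  also have "\<dots> = mat_trace (Q * (P * T))"
    using carrier by (intro mat_trace_mult_comm) auto
  also have "Q * (P * T) = T"
    using carrier \<open>Q * P = 1\<^sub>m n\<close> by (auto simp: assoc_mult_mat [symmetric, of Q n n P n T n])
  finally show ?thesis .
qed

lemma dim_mat_adjoint [simp]:
  "dim_row (mat_adjoint A) = dim_col A" "dim_col (mat_adjoint A) = dim_row A"
  by (simp_all add: mat_adjoint_def)

lemma index_mat_adjoint:
  assumes "i < dim_col A" "j < dim_row A"
  shows "mat_adjoint A $$ (i,j) = conjugate (A $$ (j,i))"
  using assms by (simp add: mat_adjoint_def mat_of_rows_def)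

lemma upper_triangular_mult:
  fixes A B :: "'a::comm_ring_1 mat"
  assumes A: "A \<in> carrier_mat n n" "upper_triangular A"
    and B: "B \<in> carrier_mat n n" "upper_triangular B"
  shows "upper_triangular (A * B)"
    and "\<And>i. i < n \<Longrightarrow> (A * B) $$ (i,i) = A $$ (i,i) * B $$ (i,i)"
proof -
  have entry: "(A * B) $$ (i,j) = (\<Sum>k<n. A $$ (i,k) * B $$ (k,j))" if "i < n" "j < n" for i j
    using A B that by (auto simp: scalar_prod_def atLeast0LessThan)
  have vanish: "A $$ (i,k) * B $$ (k,j) = 0" if "i < n" "k < n" "k < i \<or> j < k" for i j k
    using A B that by (auto simp: upper_triangular_def)
  show "upper_triangular (A * B)"
  proof
    fix i j assume "j < i" "i < dim_row (A * B)"
    then show "(A * B) $$ (i,j) = 0"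
      using A by (auto simp: entry intro!: sum.neutral vanish)
  qed
  fix i assume "i < n"
  then have "(A * B) $$ (i,i) = A $$ (i,i) * B $$ (i,i) + (\<Sum>k\<in>{..<n} - {i}. A $$ (i,k) * B $$ (k,i))"
    by (simp add: entry sum.remove[of "{..<n}" i])
  also have "(\<Sum>k\<in>{..<n} - {i}. A $$ (i,k) * B $$ (k,i)) = 0"
    using \<open>i < n\<close> by (auto simp: nat_neq_iff intro!: sum.neutral vanish)
  finally show "(A * B) $$ (i,i) = A $$ (i,i) * B $$ (i,i)"
    by simp
qed

lemma order_prod_linear_factors:
  fixes c :: "nat \<Rightarrow> 'a::idom"
  shows "order z (\<Prod>i<n. [:- c i, 1:]) = card {i. i < n \<and> c i = z}"
proof (induction n)
  case 0
  show ?case by (simp add: order_0I)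
next
  case (Suc n)
  have nonzero: "(\<Prod>i<n. [:- c i, 1:]) \<noteq> 0" "[:- c n, 1:] \<noteq> 0"
    by (simp_all add: prod_zero_iff)
  have "order z (\<Prod>i<Suc n. [:- c i, 1:]) = order z (\<Prod>i<n. [:- c i, 1:]) + order z [:- c n, 1:]"
    unfolding prod.lessThan_Suc by (rule order_mult) (metis nonzero mult_eq_0_iff)
  also have "\<dots> = card {i. i < n \<and> c i = z} + (if c n = z then 1 else 0)"
    by (simp add: Suc.IH order_linear')
  also have "\<dots> = card {i. i < Suc n \<and> c i = z}"
  proof -
    have "{i. i < Suc n \<and> c i = z} = {i. i < n \<and> c i = z} \<union> (if c n = z then {n} else {})"
      by (auto simp: less_Suc_eq)
    then show ?thesis
      by simp
  qed
  finally show ?case .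
qed

lemma sum_roots_prod_linear_factors:
  fixes c :: "nat \<Rightarrow> 'a::idom" and f :: "'a \<Rightarrow> real" and n :: nat
  defines "P \<equiv> \<Prod>i<n. [:- c i, 1:]"
  shows "(\<Sum>z\<in>{z. poly P z = 0}. real (order z P) * f z) = (\<Sum>i<n. f (c i))"
proof -
  have roots: "{z. poly P z = 0} = c ` {..<n}"
    by (auto simp: P_def poly_prod prod_zero_iff)
  have "(\<Sum>i<n. f (c i)) = (\<Sum>z\<in>c ` {..<n}. \<Sum>i\<in>{i. i \<in> {..<n} \<and> c i = z}. f (c i))"
    by (rule sum.image_gen) simp
  also have "\<dots> = (\<Sum>z\<in>c ` {..<n}. real (order z P) * f z)"
    by (intro sum.cong refl) (simp add: P_def order_prod_linear_factors)
  finally show ?thesis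
    by (simp add: roots)
qed

lemma schatten_norm_eq_lp_norm:
  assumes char_poly: "char_poly (mat_adjoint A * A) = (\<Prod>i<n. [:- complex_of_real (s i ^ 2), 1:])"
    and s: "\<And>i. i < n \<Longrightarrow> 0 \<le> s i"
  shows "schatten_norm p A = lp_norm p n s"
proof -
  define c where "c i = complex_of_real (s i ^ 2)" for i
  have sing_vals: "sq_sing_vals A = c ` {..<n}"
    by (auto simp: sq_sing_vals_def char_poly c_def poly_prod prod_zero_iff)
  have sqrt_c: "sqrt (cmod (c i)) = s i" if "i < n" for i
    using s[OF that] by (simp add: c_def norm_power)
  show ?thesis
  proof (cases "p = \<infinity>")
    case True
    have "(\<lambda>z. sqrt (cmod z)) ` sq_sing_vals A = s ` {..<n}"
      unfolding sing_vals image_image using sqrt_c by (auto intro!: image_cong)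
    then show ?thesis
      using True by (simp add: schatten_norm_def lp_norm_def)
  next
    case False
    then show ?thesis
      using sum_roots_prod_linear_factors[of c n "\<lambda>z. sqrt (cmod z) powr real_of_ereal p"] sqrt_c
      by (simp add: schatten_norm_def lp_norm_def sq_sing_vals_def char_poly c_def)
  qed
qed

lemma schatten_norm_diagonal:
  assumes E: "E \<in> carrier_mat n n" and "diagonal_mat E"
  shows "schatten_norm p E = lp_norm p n (\<lambda>i. cmod (E $$ (i,i)))"
proof -
  define M where
    "M = mat n n (\<lambda>(i,j). if i = j then complex_of_real (cmod (E $$ (i,i)) ^ 2) else 0)"
  have off_diag: "E $$ (i,j) = 0" if "i < n" "j < n" "i \<noteq> j" for i j
    using assms that by (auto simp: diagonal_mat_def)
  have "mat_adjoint E * E = M"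
  proof (rule eq_matI)
    fix i j assume "i < dim_row M" "j < dim_col M"
    then have "i < n" "j < n" by (simp_all add: M_def)
    then have "(mat_adjoint E * E) $$ (i,j) = (\<Sum>k<n. cnj (E $$ (k,i)) * E $$ (k,j))"
      using E by (auto simp: scalar_prod_def atLeast0LessThan index_mat_adjoint intro!: sum.cong)
    also have "\<dots> = cnj (E $$ (i,i)) * E $$ (i,j)"
      using \<open>i < n\<close> off_diag by (simp add: sum.remove[of "{..<n}" i] sum.neutral)
    also have "\<dots> = M $$ (i,j)"
      using \<open>i < n\<close> \<open>j < n\<close> off_diag complex_norm_square[of "E $$ (i,i)"]
      by (auto simp: M_def mult.commute)
    finally show "(mat_adjoint E * E) $$ (i,j) = M $$ (i,j)" .
  qed (use E in \<open>simp_all add: M_def\<close>)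
  moreover have "char_poly M = (\<Prod>i<n. [:- complex_of_real (cmod (E $$ (i,i)) ^ 2), 1:])"
    by (subst char_poly_upper_triangular[of M n])
      (auto simp: M_def upper_triangular_def diag_mat_def prod.distinct_set_conv_list[symmetric] atLeast0LessThan)
  ultimately show ?thesis
    by (simp add: schatten_norm_eq_lp_norm)
qed

lemma hadamard_diagonal:
  assumes "D \<in> carrier_mat n n" and "diagonal_mat D"
  shows "hadamard D B \<in> carrier_mat n n" and "diagonal_mat (hadamard D B)"
    and "\<And>i. i < n \<Longrightarrow> hadamard D B $$ (i,i) = D $$ (i,i) * B $$ (i,i)"
  using assms by (auto simp: hadamard_def diagonal_mat_def)

lemma schatten_norm_hadamard_diagonal:
  assumes "D \<in> carrier_mat n n" and "diagonal_mat D"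
  shows "schatten_norm p (hadamard D B) = lp_norm p n (\<lambda>i. cmod (D $$ (i,i)) * cmod (B $$ (i,i)))"
  using schatten_norm_diagonal[OF hadamard_diagonal(1,2)[OF assms]] hadamard_diagonal(3)[OF assms]
  by (simp add: norm_mult cong: lp_norm_cong)

lemma psd_mat_eigenvalue:
  assumes "B \<in> psd_mats n" and "eigenvalue B e"
  shows "e = complex_of_real (Re e)" and "0 \<le> Re e"
proof -
  have "B \<in> carrier_mat n n"
    and qform: "\<And>v. v \<in> carrier_vec n \<Longrightarrow> qform B v \<in> \<real> \<and> 0 \<le> Re (qform B v)"
    using assms(1) by (auto simp: psd_mats_def)
  obtain v where v: "v \<in> carrier_vec n" "v \<noteq> 0\<^sub>v n" and eigen: "B *\<^sub>v v = e \<cdot>\<^sub>v v"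
    using assms(2) \<open>B \<in> carrier_mat n n\<close> by (auto simp: eigenvalue_def eigenvector_def)
  define r where "r = conjugate v \<bullet> v"
  have "0 < r"
    using v conjugate_vec_sprod_comm[OF v(1) v(1)] conjugate_square_greater_0_vec[OF v(1)]
    by (simp add: r_def)
  have "qform B v = e * r"
    using v by (simp add: qform_def eigen r_def)
  with qform[OF v(1)] have "e * r \<in> \<real>" "0 \<le> Re (e * r)"
    by auto
  moreover have "Im r = 0" "0 < Re r"
    using \<open>0 < r\<close> by (auto simp: less_complex_def)
  ultimately have "Im e = 0" "0 \<le> Re e"
    by (auto simp: complex_is_Real_iff zero_le_mult_iff)
  then show "e = complex_of_real (Re e)" "0 \<le> Re e"
    by (auto simp: complex_eq_iff)
qed

lemma psd_mat_schur_form: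
  assumes psd: "B \<in> psd_mats n"
  obtains T P Q and t :: "nat \<Rightarrow> real"
  where "similar_mat_wit B T P Q" and "upper_triangular T" and "T \<in> carrier_mat n n"
    and "\<And>i. i < n \<Longrightarrow> T $$ (i,i) = complex_of_real (t i)" and "\<And>i. i < n \<Longrightarrow> 0 \<le> t i"
proof -
  have B: "B \<in> carrier_mat n n"
    using psd by (simp add: psd_mats_def)
  obtain es where char_poly_B: "char_poly B = (\<Prod>e\<leftarrow>es. [:- e, 1:])"
    using char_poly_factorized[OF B] by auto
  obtain T P Q where schur: "schur_decomposition B es = (T, P, Q)"
    by (cases "schur_decomposition B es") auto
  have sim: "similar_mat_wit B T P Q" and "upper_triangular T" and "diag_mat T = es"
    using schur_decomposition[OF B char_poly_B schur] by auto
  from sim B have T: "T \<in> carrier_mat n n"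
    unfolding similar_mat_wit_def Let_def by auto
  define t where "t i = Re (T $$ (i,i))" for i
  have "eigenvalue B (T $$ (i,i))" if "i < n" for i
  proof -
    have "T $$ (i,i) \<in> set es"
      using that T \<open>diag_mat T = es\<close> by (auto simp: diag_mat_def)
    then show ?thesis
      using B by (auto simp: eigenvalue_root_char_poly char_poly_B poly_prod_list prod_list_zero_iff)
  qed
  then have "T $$ (i,i) = complex_of_real (t i)" and "0 \<le> t i" if "i < n" for i
    using psd_mat_eigenvalue[OF psd] that by (auto simp: t_def)
  with sim \<open>upper_triangular T\<close> T show ?thesis
    by (rule that)
qed

lemma similar_mat_wit_square:
  fixes A T :: "'a::comm_ring_1 mat"
  assumes sim: "similar_mat_wit A T P Q"
  shows "similar_mat_wit (A * A) (T * T) P Q"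
proof -
  obtain n where carrier: "{A, T, P, Q} \<subseteq> carrier_mat n n"
    and "P * Q = 1\<^sub>m n" "Q * P = 1\<^sub>m n"
    using sim unfolding similar_mat_wit_def Let_def by blast
  have "A * A = P * (T * T) * Q"
    using similar_mat_wit_pow_id[OF sim, of 2] carrier by (simp add: numeral_2_eq_2)
  with carrier \<open>P * Q = 1\<^sub>m n\<close> \<open>Q * P = 1\<^sub>m n\<close> show ?thesis
    unfolding similar_mat_wit_def Let_def by auto
qed

text \<open>The numbers t are the eigenvalues of B.\<close>

lemma psd_mat_spectrum:
  assumes psd: "B \<in> psd_mats n"
  obtains t :: "nat \<Rightarrow> real"
  where "\<And>i. i < n \<Longrightarrow> 0 \<le> t i"
    and "mat_trace B = complex_of_real (\<Sum>i<n. t i)"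
    and "mat_trace (B * B) = complex_of_real (\<Sum>i<n. t i ^ 2)"
    and "\<And>p. schatten_norm p B = lp_norm p n t"
proof -
  obtain T P Q t where sim: "similar_mat_wit B T P Q" and "upper_triangular T"
    and T: "T \<in> carrier_mat n n" and T_diag: "\<And>i. i < n \<Longrightarrow> T $$ (i,i) = complex_of_real (t i)"
    and t_nonneg: "\<And>i. i < n \<Longrightarrow> 0 \<le> t i"
    by (rule psd_mat_schur_form[OF psd], rule that)
  note T_upper = T \<open>upper_triangular T\<close>
  have TT: "upper_triangular (T * T)"
    using upper_triangular_mult(1)[OF T_upper T_upper] .
  have TT_diag: "(T * T) $$ (i,i) = complex_of_real (t i ^ 2)" if "i < n" for i
    using upper_triangular_mult(2)[OF T_upper T_upper that] T_diag[OF that] by (simp add: power2_eq_square)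
  note sim2 = similar_mat_wit_square[OF sim]
  have "mat_trace B = complex_of_real (\<Sum>i<n. t i)"
    unfolding mat_trace_similar[OF sim] using T by (simp add: mat_trace_def T_diag)
  moreover have "mat_trace (B * B) = complex_of_real (\<Sum>i<n. t i ^ 2)"
    unfolding mat_trace_similar[OF sim2] using T by (simp add: mat_trace_def TT_diag del: index_mult_mat(1))
  moreover have "char_poly (mat_adjoint B * B) = (\<Prod>i<n. [:- complex_of_real (t i ^ 2), 1:])"
  proof -
    have "mat_adjoint B = B"
      using psd by (simp add: psd_mats_def)
    then have "char_poly (mat_adjoint B * B) = char_poly (T * T)"
      by (simp only:) (rule char_poly_similar, use sim2 in \<open>unfold similar_mat_def, blast\<close>)
    also have "\<dots> = (\<Prod>a\<leftarrow>diag_mat (T * T). [:- a, 1:])"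
      using T TT by (intro char_poly_upper_triangular) auto
    also have "\<dots> = (\<Prod>i<n. [:- complex_of_real (t i ^ 2), 1:])"
      using T TT_diag by (simp add: diag_mat_def prod.distinct_set_conv_list[symmetric] atLeast0LessThan)
    finally show ?thesis .
  qed
  then have "schatten_norm p B = lp_norm p n t" for p
    using t_nonneg by (intro schatten_norm_eq_lp_norm)
  ultimately show ?thesis
    using that t_nonneg by blast
qed

definition outer_mat :: "nat \<Rightarrow> (nat \<Rightarrow> complex) \<Rightarrow> complex mat" where
  "outer_mat n v = mat n n (\<lambda>(i,j). v i * cnj (v j))"

lemma qform_outer_mat:
  assumes "w \<in> carrier_vec n"
  shows "qform (outer_mat n v) w = complex_of_real (cmod (\<Sum>j<n. cnj (v j) * w $ j) ^ 2)"
proof -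
  define a where "a = (\<Sum>j<n. cnj (v j) * w $ j)"
  have "outer_mat n v *\<^sub>v w = a \<cdot>\<^sub>v vec n v"
    using assms
    by (intro eq_vecI) (auto simp: outer_mat_def a_def scalar_prod_def atLeast0LessThan sum_distrib_left mult_ac)
  then have "qform (outer_mat n v) w = a * (conjugate w \<bullet> vec n v)"
    using assms by (simp add: qform_def)
  also have "conjugate w \<bullet> vec n v = cnj a"
    using assms by (simp add: a_def scalar_prod_def atLeast0LessThan mult.commute)
  finally have "qform (outer_mat n v) w = a * cnj a" .
  then show ?thesis
    unfolding a_def [symmetric] using complex_norm_square[of a] by simp
qed

lemma outer_mat_psd: "outer_mat n v \<in> psd_mats n"
proof -
  have "outer_mat n v \<in> carrier_mat n n"
    by (simp add: outer_mat_def)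
  moreover have "mat_adjoint (outer_mat n v) = outer_mat n v"
    by (rule eq_matI) (auto simp: outer_mat_def index_mat_adjoint)
  moreover have "qform (outer_mat n v) w \<in> \<real> \<and> 0 \<le> Re (qform (outer_mat n v) w)"
    if "w \<in> carrier_vec n" for w
    using that by (simp add: qform_outer_mat)
  ultimately show ?thesis
    unfolding psd_mats_def by blast
qed

lemma outer_mat_schatten_norm:
  assumes unit: "(\<Sum>i<n. cmod (v i) ^ 2) = 1" and "0 < p"
  shows "schatten_norm p (outer_mat n v) = 1"
proof -
  obtain t where t: "\<And>i. i < n \<Longrightarrow> 0 \<le> t i"
    and trace: "mat_trace (outer_mat n v) = complex_of_real (\<Sum>i<n. t i)"
    and trace_sq: "mat_trace (outer_mat n v * outer_mat n v) = complex_of_real (\<Sum>i<n. t i ^ 2)"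
    and norm: "\<And>p. schatten_norm p (outer_mat n v) = lp_norm p n t"
    using psd_mat_spectrum[OF outer_mat_psd] by blast
  have unit': "(\<Sum>i<n. v i * cnj (v i)) = 1"
    using arg_cong[OF unit, of complex_of_real] by (simp flip: complex_norm_square)
  have "mat_trace (outer_mat n v) = 1"
    using unit' by (simp add: mat_trace_def outer_mat_def)
  moreover have "mat_trace (outer_mat n v * outer_mat n v) = 1"
  proof -
    have "(outer_mat n v * outer_mat n v) $$ (i,i) = v i * cnj (v i) * (\<Sum>k<n. v k * cnj (v k))"
      if "i < n" for i
      using that by (simp add: outer_mat_def scalar_prod_def atLeast0LessThan sum_distrib_left mult_ac)
    then show ?thesis
      using unit' by (simp add: mat_trace_def outer_mat_def)
  qed
  ultimately have "(\<Sum>i<n. t i) = 1" "(\<Sum>i<n. t i ^ 2) = 1"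
    using trace trace_sq by (metis of_real_eq_1_iff)+
  then show ?thesis
    using norm lp_norm_eq_1_if_sum_and_sum_squares_eq_1[OF \<open>0 < p\<close> t] by simp
qed

lemma psd_mat_diag_sum_ge_1:
  assumes psd: "B \<in> psd_mats n" and "0 < n" "1 \<le> p" "schatten_norm p B = 1"
  shows "1 \<le> (\<Sum>i<n. cmod (B $$ (i,i)))"
proof -
  obtain t where t: "\<And>i. i < n \<Longrightarrow> 0 \<le> t i"
    and trace: "mat_trace B = complex_of_real (\<Sum>i<n. t i)"
    and norm: "\<And>p. schatten_norm p B = lp_norm p n t"
    by (rule psd_mat_spectrum[OF psd], rule that)
  have "B \<in> carrier_mat n n"
    using psd unfolding psd_mats_def by blast
  have "lp_norm p n t = 1"
    using assms(4) by (simp add: norm)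
  then have "1 \<le> (\<Sum>i<n. t i)"
    using \<open>0 < n\<close> \<open>1 \<le> p\<close> t by (intro sum_ge_1_if_lp_norm_eq_1)
  also have "(\<Sum>i<n. t i) = cmod (mat_trace B)"
    using sum_nonneg[of "{..<n}" t] t unfolding trace norm_of_real by simp
  also have "\<dots> \<le> (\<Sum>i<n. cmod (B $$ (i,i)))"
    unfolding mat_trace_def using \<open>B \<in> carrier_mat n n\<close> by (simp add: norm_sum)
  finally show ?thesis .
qed

lemma I_val_eqI:
  assumes "B\<^sub>0 \<in> psd_mats n" "schatten_norm p B\<^sub>0 = 1" "schatten_norm p (hadamard A B\<^sub>0) = c"
    and "\<And>B. B \<in> psd_mats n \<Longrightarrow> schatten_norm p B = 1 \<Longrightarrow> c \<le> schatten_norm p (hadamard A B)"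
  shows "I_val p n A = c"
  unfolding I_val_def using assms by (intro cInf_eq_minimum) auto

lemma I_val_diagonal:
  assumes "0 < n" and D: "D \<in> carrier_mat n n" "diagonal_mat D"
    and nonzero: "\<And>i. i < n \<Longrightarrow> D $$ (i,i) \<noteq> 0"
    and p: "1 < p" "inverse p + ereal (1/q) = 1"
  shows "I_val p n D = (\<Sum>i<n. cmod (D $$ (i,i)) powr (-q)) powr (-1/q)"
proof -
  define d where "d i = cmod (D $$ (i,i))" for i
  define S where "S = (\<Sum>i<n. d i powr (-q))"
  have d: "0 < d i" if "i < n" for i
    using nonzero[OF that] by (simp add: d_def)
  have "0 < S"
    unfolding S_def using \<open>0 < n\<close> nonzero by (intro sum_pos) (auto simp: d_def)
  \<comment> \<open>the equality case of Hoelder's inequality\<close>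
  define v where "v i = complex_of_real (sqrt (d i powr (-q) / S))" for i
  have v_sq: "cmod (v i) ^ 2 = d i powr (-q) / S" for i
    using \<open>0 < S\<close> by (simp add: v_def)
  have "(\<Sum>i<n. cmod (v i) ^ 2) = 1"
    using \<open>0 < S\<close> by (simp add: v_sq S_def sum_divide_distrib [symmetric])
  moreover have "0 < p"
    using p(1) by (cases p) auto
  ultimately have "schatten_norm p (outer_mat n v) = 1"
    by (rule outer_mat_schatten_norm)
  moreover have "schatten_norm p (hadamard D (outer_mat n v)) = S powr (-1/q)"
  proof -
    have "cmod (outer_mat n v $$ (i,i)) = d i powr (-q) / S" if "i < n" for i
      using that v_sq[of i] by (simp add: outer_mat_def norm_mult power2_eq_square)
    then have "schatten_norm p (hadamard D (outer_mat n v)) = lp_norm p n (\<lambda>i. d i * (d i powr (-q) / S))"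
      unfolding schatten_norm_hadamard_diagonal[OF D] by (intro lp_norm_cong) (simp add: d_def)
    also have "\<dots> = S powr (-1/q)"
      using p \<open>0 < n\<close> d unfolding S_def by (rule lp_norm_weighted_attained)
    finally show ?thesis .
  qed
  moreover have "S powr (-1/q) \<le> schatten_norm p (hadamard D B)"
    if "B \<in> psd_mats n" "schatten_norm p B = 1" for B
  proof -
    have "1 \<le> (\<Sum>i<n. cmod (B $$ (i,i)))"
      using that \<open>0 < n\<close> p by (intro psd_mat_diag_sum_ge_1) auto
    then have "S powr (-1/q) \<le> lp_norm p n (\<lambda>i. d i * cmod (B $$ (i,i)))"
      unfolding S_def using p \<open>0 < n\<close> d by (intro lp_norm_weighted_lower_bound) auto
    then show ?thesis
      using D by (simp add: schatten_norm_hadamard_diagonal d_def)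
  qed
  ultimately show ?thesis
    using outer_mat_psd by (intro I_val_eqI) (auto simp: S_def d_def)
qed

lemma pd_mat_diag_entry:
  assumes "pd_mat n D" and "i < n"
  shows "0 < Re (D $$ (i,i))" and "cmod (D $$ (i,i)) = Re (D $$ (i,i))"
proof -
  have "D \<in> carrier_mat n n"
    and pos: "\<And>v. v \<in> carrier_vec n \<Longrightarrow> v \<noteq> 0\<^sub>v n \<Longrightarrow> qform D v \<in> \<real> \<and> 0 < Re (qform D v)"
    using assms(1) by (auto simp: pd_mat_def)
  have "conjugate (unit_vec n i) = (unit_vec n i :: complex vec)"
    using assms(2) by (intro eq_vecI) auto
  then have "qform D (unit_vec n i) = D $$ (i,i)"
    using \<open>D \<in> carrier_mat n n\<close> assms(2) by (simp add: qform_def)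
  then have "D $$ (i,i) \<in> \<real>" "0 < Re (D $$ (i,i))"
    using pos[of "unit_vec n i"] assms(2) by auto
  then show "0 < Re (D $$ (i,i))" "cmod (D $$ (i,i)) = Re (D $$ (i,i))"
    by (auto simp: complex_is_Real_iff cmod_eq_Re)
qed

theorem corollary5p5:
  fixes n :: nat and D :: "complex mat" and p :: ereal and q :: real
  assumes "n \<ge> 1"
    and "pd_mat n D" and "diagonal_mat D"
    and "1 < p"
    and "inverse p + ereal (1 / q) = 1"
  shows "I_val p n D = (\<Sum>i<n. Re (D $$ (i,i)) powr (- q)) powr (- 1 / q)"
proof -
  note entry = pd_mat_diag_entry[OF assms(2)]
  have "D \<in> carrier_mat n n"
    using assms(2) by (simp add: pd_mat_def)
  moreover have "D $$ (i,i) \<noteq> 0" if "i < n" for i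
    using entry(1)[OF that] by auto
  ultimately have "I_val p n D = (\<Sum>i<n. cmod (D $$ (i,i)) powr (-q)) powr (-1/q)"
    using assms by (intro I_val_diagonal) auto
  also have "\<dots> = (\<Sum>i<n. Re (D $$ (i,i)) powr (- q)) powr (- 1 / q)"
    using entry(2) by simp
  finally show ?thesis .
qed

end
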